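(* Let $\omega\in(0,1/2)$, $\tau>0$ and $k$ a positive integer. Suppose the test statistic $h$ satisfies $h\mid\lambda\sim\chi^2_k(\lambda)$, with $\lambda\sim(1-\omega)\delta_0+\omega\,\mathrm{G}(k/2+1,\,1/(2\tau^2))$ under $\mathrm{H}_0$ and $\lambda\sim\omega\delta_0+(1-\omega)\mathrm{G}(k/2+1,\,1/(2\tau^2))$ under $\mathrm{H}_1$. Then the Bayes factor in favor of $\mathrm{H}_1$ is $$\mathrm{BF}^t_{10}(h\mid\tau^2,\omega)=\frac{\omega+(1-\omega)R}{(1-\omega)+\omega R},$$ where $R=m_1(h\mid\tau^2)/m_0(h)$, with $m_0(h)$ the central $\chi^2_k$ density at $h$ and $m_1(h\mid\tau^2)$ the marginal density of $h$ when $\lambda\sim\mathrm{G}(k/2+1,1/(2\tau^2))$, and $$R=(1+\tau^2)^{-k/2-1}\,{}_1F_1\!\left(\tfrac k2+1,\ \tfrac k2;\ \frac{\tau^2h}{2(1+\tau^2)}\right).$$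
   Context: $\delta_0$ is the point mass at $0$. $\chi^2_k(\lambda)$ is the noncentral chi-squared distribution with $k$ degrees of freedom and noncentrality $\lambda$, with density $\sum_{i\ge0}e^{-\lambda/2}\frac{(\lambda/2)^i}{i!}f_{k+2i}(h)$, $f_\nu$ the central $\chi^2_\nu$ density. $\mathrm{G}(\alpha,\theta)$ is the gamma distribution with shape $\alpha$ and rate $\theta$. ${}_1F_1(a,b;x)=\sum_{i\ge0}\frac{(a)_i}{(b)_i\,i!}x^i$. The Bayes factor is the ratio of the marginal density of $h$ under $\mathrm{H}_1$ to that under $\mathrm{H}_0$. *)

theory Defs
  imports "HOL-Analysis.Analysis"
begin

definition chi2_density :: "real \<Rightarrow> real \<Rightarrow> real" where
  "chi2_density nu h =
     (if h > 0 then h powr (nu / 2 - 1) * exp (- h / 2) / (2 powr (nu / 2) * Gamma (nu / 2)) else 0)"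

definition ncchi2_density :: "nat \<Rightarrow> real \<Rightarrow> real \<Rightarrow> real" where
  "ncchi2_density k lam h =
     (\<Sum>i. exp (- lam / 2) * (lam / 2) ^ i / fact i * chi2_density (real k + 2 * real i) h)"

definition gamma_density :: "real \<Rightarrow> real \<Rightarrow> real \<Rightarrow> real" where
  "gamma_density a theta x =
     (if x > 0 then theta powr a * x powr (a - 1) * exp (- theta * x) / Gamma a else 0)"

definition hyp1f1 :: "real \<Rightarrow> real \<Rightarrow> real \<Rightarrow> real" where
  "hyp1f1 a b x = (\<Sum>i. pochhammer a i / (pochhammer b i * fact i) * x ^ i)"

definition m0 :: "nat \<Rightarrow> real \<Rightarrow> real" where
  "m0 k h = chi2_density (real k) h"

definition m1 :: "nat \<Rightarrow> real \<Rightarrow> real \<Rightarrow> real" where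
  "m1 k tau2 h =
     (LBINT lam:{0<..}. ncchi2_density k lam h * gamma_density (real k / 2 + 1) (1 / (2 * tau2)) lam)"

text \<open>Marginal densities under H0 and H1. The point mass at 0 contributes the
  noncentral density at lambda = 0.\<close>
definition marg_H0 :: "nat \<Rightarrow> real \<Rightarrow> real \<Rightarrow> real \<Rightarrow> real" where
  "marg_H0 k tau2 \<omega> h = (1 - \<omega>) * ncchi2_density k 0 h + \<omega> * m1 k tau2 h"

definition marg_H1 :: "nat \<Rightarrow> real \<Rightarrow> real \<Rightarrow> real \<Rightarrow> real" where
  "marg_H1 k tau2 \<omega> h = \<omega> * ncchi2_density k 0 h + (1 - \<omega>) * m1 k tau2 h"

definition bayes_factor_10 :: "nat \<Rightarrow> real \<Rightarrow> real \<Rightarrow> real \<Rightarrow> real" where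
  "bayes_factor_10 k tau2 \<omega> h = marg_H1 k tau2 \<omega> h / marg_H0 k tau2 \<omega> h"

end

theory Submission
  imports Defs "HOL-Real_Asymp.Real_Asymp"
begin

(* Writing the noncentral density as the Poisson(lambda/2) mixture of central densities
   chi2_(k+2i), the Gamma(a, theta) prior can be integrated term by term (Tonelli): the
   Poisson weights integrate to negative-binomial weights, and chi2_(k+2i)(h) is chi2_k(h)
   times (h/2)^i / (k/2)_i, so the resummed series is chi2_k(h) (theta/(theta+1/2))^a
   1F1(a, k/2; h/(4 theta + 2)).  The point mass at 0 contributes m0(h) under both
   hypotheses, so dividing numerator and denominator of the Bayes factor by m0(h) gives
   the formula in terms of R = m1/m0. *)

lemma summable_hyp1f1:
  fixes a b z :: real
  assumes b: "b > 0"
  shows "summable (\<lambda>i. pochhammer a i / (pochhammer b i * fact i) * z ^ i)"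
proof -
  define r where "r n = (a + n) / ((b + n) * (real n + 1)) * z" for n :: nat
  have "(\<lambda>n. (a + n) / ((b + n) * (real n + 1))) \<longlonglongrightarrow> 0"
    by real_asymp
  then have "r \<longlonglongrightarrow> 0"
    unfolding r_def by (rule tendsto_mult_left_zero)
  then obtain N where N: "\<And>n. n \<ge> N \<Longrightarrow> \<bar>r n\<bar> < 1/2"
    using LIMSEQ_D[of r 0 "1/2"] by auto
  define t where "t = (\<lambda>n. pochhammer a n / (pochhammer b n * fact n) * z ^ n)"
  have "summable t"
  proof (rule summable_ratio_test[of "1/2" N])
    fix n assume "n \<ge> N"
    have "pochhammer b n > 0"
      using b by (intro pochhammer_pos)
    then have "t (Suc n) = t n * r n"
      using b by (simp add: t_def r_def pochhammer_rec' field_simps)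
    then have "norm (t (Suc n)) = \<bar>r n\<bar> * norm (t n)"
      by (simp add: abs_mult)
    also have "\<dots> \<le> 1/2 * norm (t n)"
      using N[OF \<open>n \<ge> N\<close>] by (intro mult_right_mono) auto
    finally show "norm (t (Suc n)) \<le> 1/2 * norm (t n)" .
  qed simp
  then show ?thesis
    unfolding t_def .
qed

lemma nn_integral_powr_exp_Gamma:
  fixes s c :: real
  assumes s: "s > 0" and c: "c > 0"
  shows "(\<integral>\<^sup>+x. ennreal (indicator {0<..} x * x powr (s - 1) * exp (- c * x)) \<partial>lborel)
           = ennreal (Gamma s / c powr s)"
proof -
  let ?f = "\<lambda>x::real. ennreal (indicator {0<..} x * x powr (s - 1) * exp (- c * x))"
  let ?g = "\<lambda>x::real. ennreal (indicator {0..} x * x powr (s - 1) / exp x)"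
  have "(\<integral>\<^sup>+x. ?f x \<partial>lborel) = ennreal (1 / c) * (\<integral>\<^sup>+x. ?f (x / c) \<partial>lborel)"
    using nn_integral_real_affine[of ?f "1 / c" 0] c by simp
  also have "(\<lambda>x. ?f (x / c)) = (\<lambda>x. ennreal (c powr (1 - s)) * ?g x)"
  proof
    fix x :: real
    show "?f (x / c) = ennreal (c powr (1 - s)) * ?g x"
    proof (cases "x > 0")
      case True
      have "(x / c) powr (s - 1) = x powr (s - 1) * c powr (1 - s)"
        using True c by (simp add: powr_divide powr_diff field_simps)
      then show ?thesis
        using True c by (simp add: ennreal_mult'[symmetric] exp_minus field_simps)
    next
      case False
      then show ?thesis
        using c by (cases "x = 0") (auto simp: indicator_def zero_less_divide_iff)
    qed
  qed
  also have "(\<integral>\<^sup>+x. ennreal (c powr (1 - s)) * ?g x \<partial>lborel) = ennreal (c powr (1 - s)) * ennreal (Gamma s)"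
    by (subst nn_integral_cmult) (auto simp: Gamma_conv_nn_integral_real[OF s])
  also have "ennreal (1 / c) * (ennreal (c powr (1 - s)) * ennreal (Gamma s)) = ennreal (Gamma s / c powr s)"
    using c s Gamma_real_pos[OF s]
    by (simp add: ennreal_mult[symmetric] powr_diff field_simps)
  finally show ?thesis .
qed

lemma Gamma_add_of_nat: "z \<notin> \<int>\<^sub>\<le>\<^sub>0 \<Longrightarrow> Gamma (z + of_nat n) = Gamma z * pochhammer z n"
  by (simp add: pochhammer_Gamma Gamma_eq_zero_iff)

lemma Gamma_add_real_pos: "x > 0 \<Longrightarrow> Gamma (x + real n) = Gamma x * pochhammer x n"
  by (rule Gamma_add_of_nat) (auto elim!: nonpos_Ints_cases)

lemma chi2_density_pos: "nu > 0 \<Longrightarrow> h > 0 \<Longrightarrow> 0 < chi2_density nu h"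
  by (simp add: chi2_density_def Gamma_real_pos)

lemma chi2_density_nonneg: "nu > 0 \<Longrightarrow> 0 \<le> chi2_density nu h"
  using chi2_density_pos[of nu h] by (cases "h > 0") (auto simp: chi2_density_def)

lemma gamma_density_pos: "a > 0 \<Longrightarrow> \<theta> > 0 \<Longrightarrow> x > 0 \<Longrightarrow> 0 < gamma_density a \<theta> x"
  by (simp add: gamma_density_def Gamma_real_pos)

lemma gamma_density_nonneg: "a > 0 \<Longrightarrow> 0 \<le> gamma_density a \<theta> x"
  by (simp add: gamma_density_def Gamma_real_pos less_imp_le)

lemma poisson_gamma_density_nonneg: "a > 0 \<Longrightarrow> 0 \<le> exp (- x / 2) * (x / 2) ^ i / fact i * gamma_density a \<theta> x"
  using gamma_density_nonneg[of a \<theta> x]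
  by (cases "x > 0") (auto simp: gamma_density_def intro!: mult_nonneg_nonneg)

lemma chi2_density_add_even:
  fixes nu h :: real
  assumes nu: "nu > 0" and h: "h > 0"
  shows "chi2_density (nu + 2 * real i) h = chi2_density nu h * (h / 2) ^ i / pochhammer (nu / 2) i"
proof -
  have "Gamma ((nu + 2 * real i) / 2) = Gamma (nu / 2) * pochhammer (nu / 2) i"
    using nu Gamma_add_real_pos[of "nu / 2" i] by (simp add: add_divide_distrib)
  moreover have "h powr ((nu + 2 * real i) / 2 - 1) = h powr (nu / 2 - 1) * h ^ i"
    using h by (simp add: powr_realpow[symmetric] powr_add[symmetric] field_simps)
  moreover have "(2::real) powr ((nu + 2 * real i) / 2) = 2 powr (nu / 2) * 2 ^ i"
    by (simp add: add_divide_distrib powr_add powr_realpow[symmetric])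
  moreover have "pochhammer (nu / 2) i > 0"
    using nu by (simp add: pochhammer_pos)
  moreover have "Gamma (nu / 2) > 0"
    using nu by (simp add: Gamma_real_pos)
  ultimately show ?thesis
    using h by (simp add: chi2_density_def power_divide field_simps)
qed

lemma ncchi2_density_zero: "ncchi2_density k 0 h = chi2_density (real k) h"
proof -
  have "(\<lambda>i. exp (- 0 / 2) * (0 / 2) ^ i / fact i * chi2_density (real k + 2 * real i) h)
      = (\<lambda>i. if i = 0 then chi2_density (real k) h else 0)"
    by auto
  then show ?thesis
    unfolding ncchi2_density_def by (simp add: sums_unique[OF sums_single, symmetric])
qed

lemma has_bochner_integral_powr_exp_Gamma:
  fixes s c :: real
  assumes "s > 0" and "c > 0"
  shows "has_bochner_integral lborel (\<lambda>x. indicator {0<..} x * x powr (s - 1) * exp (- c * x)) (Gamma s / c powr s)"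
  using assms by (intro has_bochner_integral_nn_integral nn_integral_powr_exp_Gamma)
    (auto simp: Gamma_real_pos less_imp_le)

lemma has_bochner_integral_poisson_gamma_density:
  fixes a \<theta> :: real
  assumes a: "a > 0" and \<theta>: "\<theta> > 0"
  shows "has_bochner_integral lborel (\<lambda>x. exp (- x / 2) * (x / 2) ^ i / fact i * gamma_density a \<theta> x)
           ((\<theta> / (\<theta> + 1/2)) powr a * pochhammer a i / fact i * (1 / (2 * \<theta> + 1)) ^ i)"
proof -
  define D where "D = \<theta> powr a / (2 ^ i * fact i * Gamma a)"
  have integrand: "exp (- x / 2) * (x / 2) ^ i / fact i * gamma_density a \<theta> x
      = D * (indicator {0<..} x * x powr (a + real i - 1) * exp (- (\<theta> + 1/2) * x))" for x :: real
  proof (cases "x > 0")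
    case True
    have "x powr (a + real i - 1) = x powr (a - 1) * x ^ i"
      using True by (simp add: powr_add[symmetric] powr_realpow[symmetric] algebra_simps)
    moreover have "exp (- (\<theta> + 1/2) * x) = exp (- x / 2) * exp (- \<theta> * x)"
      by (simp add: exp_add[symmetric] algebra_simps)
    ultimately show ?thesis
      using True by (simp add: D_def gamma_density_def power_divide field_simps)
  qed (simp add: gamma_density_def)
  have integral_value: "D * (Gamma (a + real i) / (\<theta> + 1/2) powr (a + real i))
      = (\<theta> / (\<theta> + 1/2)) powr a * pochhammer a i / fact i * (1 / (2 * \<theta> + 1)) ^ i"
  proof -
    define q where "q = \<theta> + 1/2"
    have q: "q > 0" "2 * q = 2 * \<theta> + 1"
      using \<theta> by (simp_all add: q_def)
    have "D * (Gamma (a + real i) / q powr (a + real i))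
        = (\<theta> powr a / q powr a) * pochhammer a i / fact i * (1 / (2 * q)) ^ i"
      using q(1) Gamma_real_pos[OF a]
      by (simp add: D_def Gamma_add_real_pos[OF a] powr_add powr_realpow power_one_over
          power_mult_distrib field_simps)
    then show ?thesis
      unfolding q_def[symmetric] q(2) using \<theta> q(1) by (simp add: powr_divide)
  qed
  show ?thesis
    unfolding integrand integral_value[symmetric] using a \<theta>
    by (intro has_bochner_integral_mult_right has_bochner_integral_powr_exp_Gamma) auto
qed

lemma
  fixes f :: "nat \<Rightarrow> 'a \<Rightarrow> real"
  assumes integrable: "\<And>i. integrable M (f i)"
    and nonneg: "\<And>i x. x \<in> space M \<Longrightarrow> 0 \<le> f i x"
    and summable: "summable (\<lambda>i. integral\<^sup>L M (f i))"
  shows AE_summable_of_summable_integral_nonneg: "AE x in M. summable (\<lambda>i. f i x)"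
    and integral_suminf_nonneg: "(\<integral>x. (\<Sum>i. f i x) \<partial>M) = (\<Sum>i. integral\<^sup>L M (f i))"
proof -
  have [measurable]: "f i \<in> borel_measurable M" for i
    using integrable by blast
  have "(\<integral>\<^sup>+x. (\<Sum>i. ennreal (f i x)) \<partial>M) = (\<Sum>i. \<integral>\<^sup>+x. f i x \<partial>M)"
    by (rule nn_integral_suminf) simp
  also have "\<dots> = (\<Sum>i. ennreal (integral\<^sup>L M (f i)))"
    using integrable nonneg by (simp add: nn_integral_eq_integral)
  also have "\<dots> \<noteq> \<infinity>"
    using summable nonneg by (simp add: ennreal_suminf_neq_top integral_nonneg)
  finally have "AE x in M. (\<Sum>i. ennreal (f i x)) \<noteq> \<infinity>"
    by (intro nn_integral_noteq_infinite) auto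
  moreover have "AE x in M. \<forall>i. 0 \<le> f i x"
    using nonneg by (simp add: AE_I2)
  ultimately show summable_AE: "AE x in M. summable (\<lambda>i. f i x)"
    by eventually_elim (auto intro: summable_suminf_not_top)
  show "(\<integral>x. (\<Sum>i. f i x) \<partial>M) = (\<Sum>i. integral\<^sup>L M (f i))"
  proof (rule integral_suminf[OF integrable])
    show "AE x in M. summable (\<lambda>i. norm (f i x))"
      using summable_AE \<open>AE x in M. \<forall>i. 0 \<le> f i x\<close> by eventually_elim simp
    show "summable (\<lambda>i. \<integral>x. norm (f i x) \<partial>M)"
    proof -
      have "(\<integral>x. norm (f i x) \<partial>M) = integral\<^sup>L M (f i)" for i
        using nonneg by (intro Bochner_Integration.integral_cong) auto
      then show ?thesis
        using summable by simp
    qed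
  qed
qed

lemma has_bochner_integral_chi2_poisson_gamma_density:
  fixes nu h a \<theta> :: real
  assumes nu: "nu > 0" and h: "h > 0" and a: "a > 0" and \<theta>: "\<theta> > 0"
  shows "has_bochner_integral lborel
           (\<lambda>x. chi2_density (nu + 2 * real i) h * (exp (- x / 2) * (x / 2) ^ i / fact i * gamma_density a \<theta> x))
           (chi2_density nu h * (\<theta> / (\<theta> + 1/2)) powr a
              * (pochhammer a i / (pochhammer (nu / 2) i * fact i) * (h / (4 * \<theta> + 2)) ^ i))"
proof -
  have power: "(h / 2) ^ i * (1 / (2 * \<theta> + 1)) ^ i = (h / (4 * \<theta> + 2)) ^ i"
    by (simp add: power_mult_distrib[symmetric] field_simps)
  have "chi2_density (nu + 2 * real i) h
        * ((\<theta> / (\<theta> + 1/2)) powr a * pochhammer a i / fact i * (1 / (2 * \<theta> + 1)) ^ i)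
      = chi2_density nu h * (h / 2) ^ i / pochhammer (nu / 2) i
        * ((\<theta> / (\<theta> + 1/2)) powr a * pochhammer a i / fact i * (1 / (2 * \<theta> + 1)) ^ i)"
    using nu h by (subst chi2_density_add_even) auto
  also have "\<dots> = chi2_density nu h * (\<theta> / (\<theta> + 1/2)) powr a
        * (pochhammer a i / (pochhammer (nu / 2) i * fact i) * (h / (4 * \<theta> + 2)) ^ i)"
    unfolding power[symmetric] by (simp add: field_simps)
  finally have coefficient: "chi2_density (nu + 2 * real i) h
        * ((\<theta> / (\<theta> + 1/2)) powr a * pochhammer a i / fact i * (1 / (2 * \<theta> + 1)) ^ i)
      = chi2_density nu h * (\<theta> / (\<theta> + 1/2)) powr a
        * (pochhammer a i / (pochhammer (nu / 2) i * fact i) * (h / (4 * \<theta> + 2)) ^ i)" .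
  show ?thesis
    unfolding coefficient[symmetric]
    by (intro has_bochner_integral_mult_right has_bochner_integral_poisson_gamma_density a \<theta>)
qed

lemma ncchi2_gamma_density_eq_suminf:
  fixes a \<theta> x h :: real
  assumes a: "a > 0" and \<theta>: "\<theta> > 0"
    and summable: "summable (\<lambda>i. chi2_density (real k + 2 * real i) h
                     * (exp (- x / 2) * (x / 2) ^ i / fact i * gamma_density a \<theta> x))"
  shows "indicator {0<..} x * (ncchi2_density k x h * gamma_density a \<theta> x)
       = (\<Sum>i. chi2_density (real k + 2 * real i) h * (exp (- x / 2) * (x / 2) ^ i / fact i * gamma_density a \<theta> x))"
proof (cases "x > 0")
  case True
  define t where "t = (\<lambda>i. exp (- x / 2) * (x / 2) ^ i / fact i * chi2_density (real k + 2 * real i) h)"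
  have "t = (\<lambda>i. chi2_density (real k + 2 * real i) h
                   * (exp (- x / 2) * (x / 2) ^ i / fact i * gamma_density a \<theta> x) / gamma_density a \<theta> x)"
    using gamma_density_pos[OF a \<theta> True] by (simp add: t_def fun_eq_iff)
  then have "summable t"
    using summable by (simp only: summable_divide)
  moreover have "ncchi2_density k x h = suminf t"
    by (simp add: ncchi2_density_def t_def)
  ultimately have "ncchi2_density k x h * gamma_density a \<theta> x = (\<Sum>i. t i * gamma_density a \<theta> x)"
    by (simp add: suminf_mult2)
  then show ?thesis
    using True by (simp add: t_def mult_ac)
qed (simp add: gamma_density_def)

lemma set_integral_ncchi2_gamma_density:
  fixes a \<theta> h :: real and k :: nat
  assumes k: "k > 0" and h: "h > 0" and a: "a > 0" and \<theta>: "\<theta> > 0"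
  shows "(LBINT lam:{0<..}. ncchi2_density k lam h * gamma_density a \<theta> lam)
       = chi2_density k h * (\<theta> / (\<theta> + 1/2)) powr a * hyp1f1 a (real k / 2) (h / (4 * \<theta> + 2))"
proof -
  define f where "f = (\<lambda>i x. chi2_density (real k + 2 * real i) h
                           * (exp (- x / 2) * (x / 2) ^ i / fact i * gamma_density a \<theta> x))"
  define c where "c = (\<lambda>i. pochhammer a i / (pochhammer (real k / 2) i * fact i) * (h / (4 * \<theta> + 2)) ^ i)"
  define C where "C = chi2_density k h * (\<theta> / (\<theta> + 1/2)) powr a"
  have f_integral: "has_bochner_integral lborel (f i) (C * c i)" for i
    unfolding f_def C_def c_def using k h a \<theta> by (intro has_bochner_integral_chi2_poisson_gamma_density) auto
  then have f_integrable: "integrable lborel (f i)" and integral_f: "integral\<^sup>L lborel (f i) = C * c i" for i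
    by (auto intro: integrable.intros has_bochner_integral_integral_eq)
  have f_nonneg: "0 \<le> f i x" for i x
  proof -
    have "0 < real k + 2 * real i"
      using k by simp
    then show ?thesis
      unfolding f_def by (intro mult_nonneg_nonneg chi2_density_nonneg poisson_gamma_density_nonneg[OF a])
  qed
  have summable_c: "summable c"
    unfolding c_def using k by (intro summable_hyp1f1) simp
  then have summable_integrals: "summable (\<lambda>i. integral\<^sup>L lborel (f i))"
    unfolding integral_f by (rule summable_mult)
  have pointwise: "AE x in lborel. indicator {0<..} x *\<^sub>R (ncchi2_density k x h * gamma_density a \<theta> x) = (\<Sum>i. f i x)"
    using AE_summable_of_summable_integral_nonneg[OF f_integrable f_nonneg summable_integrals]
    by eventually_elim (simp add: f_def ncchi2_gamma_density_eq_suminf[OF a \<theta>])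
  have [measurable]: "f i \<in> borel_measurable lborel" for i
    using f_integrable by (rule borel_measurable_integrable)
  have "(\<lambda>x. indicator {0<..} x *\<^sub>R (ncchi2_density k x h * gamma_density a \<theta> x)) \<in> borel_measurable lborel"
    unfolding ncchi2_density_def gamma_density_def chi2_density_def by measurable
  then have "(LBINT lam:{0<..}. ncchi2_density k lam h * gamma_density a \<theta> lam) = (\<integral>x. (\<Sum>i. f i x) \<partial>lborel)"
    unfolding set_lebesgue_integral_def by (rule integral_cong_AE[OF _ _ pointwise]) measurable
  also have "\<dots> = (\<Sum>i. C * c i)"
    using integral_suminf_nonneg[OF f_integrable f_nonneg summable_integrals]
    unfolding integral_f .
  also have "\<dots> = C * hyp1f1 a (real k / 2) (h / (4 * \<theta> + 2))"
    using summable_c unfolding hyp1f1_def c_def by (rule suminf_mult)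
  finally show ?thesis
    by (simp add: C_def)
qed

theorem proposition6:
  fixes \<omega> \<tau> h :: real and k :: nat
  assumes "0 < \<omega>" "\<omega> < 1/2" "\<tau> > 0" "k > 0" "h > 0"
  defines "R \<equiv> m1 k (\<tau>^2) h / m0 k h"
  shows "bayes_factor_10 k (\<tau>^2) \<omega> h = (\<omega> + (1 - \<omega>) * R) / ((1 - \<omega>) + \<omega> * R)
       \<and> R = (1 + \<tau>^2) powr (- real k / 2 - 1) *
             hyp1f1 (real k / 2 + 1) (real k / 2) (\<tau>^2 * h / (2 * (1 + \<tau>^2)))"
proof
  have m0_pos: "m0 k h > 0"
    using \<open>k > 0\<close> \<open>h > 0\<close> by (simp add: m0_def chi2_density_pos)
  have rate: "1 / (2 * \<tau>^2) / (1 / (2 * \<tau>^2) + 1/2) = 1 / (1 + \<tau>^2)"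
              "h / (4 * (1 / (2 * \<tau>^2)) + 2) = \<tau>^2 * h / (2 * (1 + \<tau>^2))"
    using \<open>\<tau> > 0\<close> by (simp_all add: field_simps)
  have shape: "real k / 2 + 1 > 0" "1 / (2 * \<tau>^2) > 0"
    using \<open>\<tau> > 0\<close> by auto
  have "(1 / (1 + \<tau>^2)) powr (real k / 2 + 1) = (1 + \<tau>^2) powr (- real k / 2 - 1)"
    using powr_minus_divide[of "1 + \<tau>^2" "real k / 2 + 1"] by (simp add: powr_divide)
  then have "m1 k (\<tau>^2) h = m0 k h * (1 + \<tau>^2) powr (- real k / 2 - 1)
      * hyp1f1 (real k / 2 + 1) (real k / 2) (\<tau>^2 * h / (2 * (1 + \<tau>^2)))"
    using set_integral_ncchi2_gamma_density[OF \<open>k > 0\<close> \<open>h > 0\<close> shape]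
    unfolding m1_def m0_def rate by simp
  then show "R = (1 + \<tau>^2) powr (- real k / 2 - 1) *
             hyp1f1 (real k / 2 + 1) (real k / 2) (\<tau>^2 * h / (2 * (1 + \<tau>^2)))"
    using m0_pos by (simp add: R_def)
  have "\<omega> + (1 - \<omega>) * R = (\<omega> * m0 k h + (1 - \<omega>) * m1 k (\<tau>^2) h) / m0 k h"
       "(1 - \<omega>) + \<omega> * R = ((1 - \<omega>) * m0 k h + \<omega> * m1 k (\<tau>^2) h) / m0 k h"
    using m0_pos by (simp_all add: R_def field_simps)
  then show "bayes_factor_10 k (\<tau>^2) \<omega> h = (\<omega> + (1 - \<omega>) * R) / ((1 - \<omega>) + \<omega> * R)"
    using m0_pos by (simp add: bayes_factor_10_def marg_H0_def marg_H1_def ncchi2_density_zero m0_def)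
qed

end
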